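(* Let $n$ be a positive integer and $x\ge1$ real. Let $k$ be an integer in the range $$\min\{\Omega(d):d\in\mathcal{M}_x(n)\}\le k\le\max\{\Omega(d):d\in\mathcal{M}_x(n)\}$$ which is closest to $\Omega(n)/2$ among integers in this range. Then $|\mathcal{M}_x(n)|\le C_k(n)$.
   Context: $\Omega(n)$ is the number of prime factors of $n$ counted with multiplicity, and $C_k(n)$ is the number of positive divisors $d$ of $n$ with $\Omega(d)=k$. For $x\in\mathbb{R}$, a positive divisor $d$ of $n$ is maximal with respect to $x$ if $d\le x$ and there is no other positive divisor $d'$ of $n$ with $d'\le x$ and $d\mid d'$; $\mathcal{M}_x(n)$ denotes the set of such divisors. *)

theory Defs
  imports Complex_Main "HOL-Computational_Algebra.Primes"
begin

definition bigOmega :: "nat \<Rightarrow> nat" where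
  "bigOmega n = size (prime_factorization n)"

definition Ck :: "nat \<Rightarrow> nat \<Rightarrow> nat" where
  "Ck k n = card {d. 0 < d \<and> d dvd n \<and> bigOmega d = k}"

definition maxdivs :: "real \<Rightarrow> nat \<Rightarrow> nat set" where
  "maxdivs x n = {d. 0 < d \<and> d dvd n \<and> real d \<le> x \<and>
      \<not> (\<exists>d'. 0 < d' \<and> d' dvd n \<and> real d' \<le> x \<and> d dvd d' \<and> d' \<noteq> d)}"

end

theory Submission
  imports Defs
begin

text \<open>
  Divisors of n correspond to submultisets of its prime factorization, and this lattice has a
  symmetric chain decomposition (de Bruijn, Tengbergen and Kruyswijk), built prime by prime:
  the product of a symmetric chain with a chain splits again into symmetric chains.
  The maximal divisors form an antichain, so they lie on pairwise different chains.
  A chain through a maximal divisor of rank t is symmetric about \<Omega>(n)/2 and contains t;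
  since k is the rank in the admissible range closest to \<Omega>(n)/2, it contains rank k as well.
  Sending each maximal divisor to the rank-k element of its chain is therefore injective.
\<close>

lemma closest_to_half_in_symmetric_range:
  fixes lo hi k t s N :: nat
  assumes "lo \<le> k" "k \<le> hi" "lo \<le> t" "t \<le> hi"
    and closest: "\<forall>j::nat. lo \<le> j \<and> j \<le> hi \<longrightarrow>
                    \<bar>real k - real N / 2\<bar> \<le> \<bar>real j - real N / 2\<bar>"
    and "s \<le> t" "t + s \<le> N"
  shows "s \<le> k \<and> k + s \<le> N"
proof (cases t k rule: linorder_cases)
  case less
  then have "\<bar>real k - real N / 2\<bar> \<le> \<bar>real (k - 1) - real N / 2\<bar>"
    using assms by (intro closest[rule_format]) linarith
  with less have "2 * k \<le> N + 1" by (simp add: of_nat_diff abs_if split: if_splits)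
  with less assms show ?thesis by linarith
next
  case greater
  then have "\<bar>real k - real N / 2\<bar> \<le> \<bar>real (k + 1) - real N / 2\<bar>"
    using assms by (intro closest[rule_format]) linarith
  then have "N \<le> 2 * k + 1" by (simp add: abs_if split: if_splits)
  with greater assms show ?thesis by linarith
qed (use assms in simp)

lemma finite_submultisets: "finite {A. A \<subseteq># M}"
proof -
  have "{A. A \<subseteq># M} \<subseteq> mset ` {xs. set xs \<subseteq> set_mset M \<and> length xs \<le> size M}"
  proof
    fix A assume "A \<in> {A. A \<subseteq># M}"
    moreover obtain xs where xs: "A = mset xs" using ex_mset[of A] by metis
    ultimately show "A \<in> mset ` {xs. set xs \<subseteq> set_mset M \<and> length xs \<le> size M}"
      by (intro image_eqI[of A mset xs, OF xs]) (auto dest: mset_subset_eqD size_mset_mono)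
  qed
  then show ?thesis by (rule finite_subset) (use finite_lists_length_le in blast)
qed

lemma subset_mset_add_replicate_msetE:
  assumes "A \<subseteq># M + replicate_mset e a" and "a \<notin># M"
  obtains B j where "B \<subseteq># M" "j \<le> e" "A = B + replicate_mset j a"
proof
  show "filter_mset (\<lambda>x. x \<noteq> a) A \<subseteq># M"
  proof (rule mset_subset_eqI)
    fix x
    show "count (filter_mset (\<lambda>x. x \<noteq> a) A) x \<le> count M x"
      using mset_subset_eq_count[OF assms(1), of x] by (cases "x = a") simp_all
  qed
  show "count A a \<le> e"
    using mset_subset_eq_count[OF assms(1), of a] assms(2) by (simp add: not_in_iff)
  show "A = filter_mset (\<lambda>x. x \<noteq> a) A + replicate_mset (count A a) a"
    by (simp add: multiset_eq_iff)
qed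

lemma add_replicate_mset_mono:
  "B \<subseteq># M \<Longrightarrow> j \<le> e \<Longrightarrow> B + replicate_mset j a \<subseteq># M + replicate_mset e a"
  by (simp add: subset_mset.add_mono replicate_mset_msubseteq_iff)

lemma add_replicate_mset_comparable:
  assumes "B \<subseteq># B'" and "size B' \<le> T" and "min j (T - size B) = min j' (T - size B')"
  shows "B + replicate_mset j a \<subseteq># B' + replicate_mset j' a \<or>
         B' + replicate_mset j' a \<subseteq># B + replicate_mset j a"
proof (cases "B = B'")
  case True
  then show ?thesis by (cases "j \<le> j'") (auto simp: replicate_mset_msubseteq_iff)
next
  case False
  with assms(1) have "size B < size B'" by (simp add: mset_subset_size subset_mset.le_neq_trans)
  with assms(2,3) have "j \<le> j'" by linarith
  with assms(1) show ?thesis by (simp add: subset_mset.add_mono replicate_mset_msubseteq_iff)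
qed

text \<open>
  A symmetric chain decomposition of the submultisets of M, given by labels: the submultisets
  with a common label c form a chain which meets exactly the ranks from bottom c to
  size M - bottom c. Labels are lists so that adjoining a new element can prepend a coordinate.
\<close>

locale symmetric_chain_labelling =
  fixes M :: "'a multiset" and chain :: "'a multiset \<Rightarrow> nat list" and bottom :: "nat list \<Rightarrow> nat"
  assumes chain_comparable:
      "A \<subseteq># M \<Longrightarrow> B \<subseteq># M \<Longrightarrow> chain A = chain B \<Longrightarrow> A \<subseteq># B \<or> B \<subseteq># A"
    and chain_rank_bounds:
      "A \<subseteq># M \<Longrightarrow> bottom (chain A) \<le> size A \<and> size A + bottom (chain A) \<le> size M"
    and chain_meets_rank:
      "A \<subseteq># M \<Longrightarrow> bottom (chain A) \<le> r \<Longrightarrow> r + bottom (chain A) \<le> size M \<Longrightarrow>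
         \<exists>B. B \<subseteq># M \<and> chain B = chain A \<and> size B = r"
begin

text \<open>
  Adjoining e copies of a new element a: the product of a chain c with bottom rank s and the
  chain of multiplicities 0, ..., e of a splits into the chains labelled l # c. Along l # c,
  first the part without a climbs c from rank s to size M - s - l while a occurs l times,
  then the multiplicity of a climbs from l to e.
\<close>

definition extended_chain :: "'a \<Rightarrow> 'a multiset \<Rightarrow> nat list" where
  "extended_chain a A =
     (let B = filter_mset (\<lambda>x. x \<noteq> a) A
      in min (count A a) (size M - bottom (chain B) - size B) # chain B)"

definition extended_bottom :: "nat list \<Rightarrow> nat" where
  "extended_bottom l = bottom (tl l) + hd l"

context
  fixes a :: 'a and e :: nat
  assumes new: "a \<notin># M"
begin

lemma extended_chain_add_replicate_mset:
  assumes "B \<subseteq># M"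
  shows "extended_chain a (B + replicate_mset j a) =
           min j (size M - bottom (chain B) - size B) # chain B"
proof -
  have "a \<notin># B" using new assms by (meson mset_subset_eqD)
  then have "filter_mset (\<lambda>x. x \<noteq> a) (B + replicate_mset j a) = B"
    and "count (B + replicate_mset j a) a = j"
    by (auto simp: multiset_eq_iff not_in_iff)
  then show ?thesis by (simp add: extended_chain_def)
qed

lemma extended_chain_comparable:
  assumes "A \<subseteq># M + replicate_mset e a" and "A' \<subseteq># M + replicate_mset e a"
    and "extended_chain a A = extended_chain a A'"
  shows "A \<subseteq># A' \<or> A' \<subseteq># A"
proof -
  obtain B j where B: "B \<subseteq># M" "A = B + replicate_mset j a"
    using assms(1) new by (rule subset_mset_add_replicate_msetE)
  obtain B' j' where B': "B' \<subseteq># M" "A' = B' + replicate_mset j' a"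
    using assms(2) new by (rule subset_mset_add_replicate_msetE)
  have labels: "min j (size M - bottom (chain B) - size B) # chain B =
                 min j' (size M - bottom (chain B') - size B') # chain B'"
    using assms(3) unfolding B(2) B'(2)
      extended_chain_add_replicate_mset[OF B(1)] extended_chain_add_replicate_mset[OF B'(1)] .
  then have same_chain: "chain B = chain B'" by simp
  define T where "T = size M - bottom (chain B)"
  have "min j (T - size B) = min j' (T - size B')"
    using labels[unfolded same_chain] by (simp add: T_def same_chain)
  moreover have "size B \<le> T" "size B' \<le> T"
    using chain_rank_bounds[OF B(1)] chain_rank_bounds[OF B'(1)] same_chain
    by (auto simp: T_def)
  ultimately show ?thesis
    using chain_comparable[OF B(1) B'(1) same_chain] add_replicate_mset_comparable B B'
    by metis
qed

lemma extended_chain_rank_bounds: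
  assumes "A \<subseteq># M + replicate_mset e a"
  shows "extended_bottom (extended_chain a A) \<le> size A \<and>
         size A + extended_bottom (extended_chain a A) \<le> size M + e"
proof -
  obtain B j where B: "B \<subseteq># M" "j \<le> e" "A = B + replicate_mset j a"
    using assms new by (rule subset_mset_add_replicate_msetE)
  show ?thesis
    using chain_rank_bounds[OF B(1)] B
    by (auto simp: extended_chain_add_replicate_mset extended_bottom_def)
qed

lemma extended_chain_meets_rank:
  assumes "A \<subseteq># M + replicate_mset e a"
    and "extended_bottom (extended_chain a A) \<le> r"
    and "r + extended_bottom (extended_chain a A) \<le> size M + e"
  shows "\<exists>A'. A' \<subseteq># M + replicate_mset e a \<and> extended_chain a A' = extended_chain a A \<and> size A' = r"
proof -
  obtain B j where B: "B \<subseteq># M" "j \<le> e" "A = B + replicate_mset j a"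
    using assms(1) new by (rule subset_mset_add_replicate_msetE)
  define s where "s = bottom (chain B)"
  define T where "T = size M - s"
  define l where "l = min j (T - size B)"
  have label: "extended_chain a A = l # chain B"
    by (simp add: B(1,3) extended_chain_add_replicate_mset l_def T_def s_def)
  have s: "s \<le> size B" "size B + s \<le> size M"
    using chain_rank_bounds[OF B(1)] by (simp_all add: s_def)
  have r: "s + l \<le> r" "r + s + l \<le> size M + e"
    using assms(2,3) by (simp_all add: label extended_bottom_def s_def)
  \<comment> \<open>the rank of the part without a of the rank-r element of the chain l # chain B\<close>
  define \<rho> where "\<rho> = min r T - l"
  have l: "s + l \<le> T" "l \<le> e" using s B(2) by (simp_all add: l_def T_def)
  then have "s \<le> \<rho>" "\<rho> + s \<le> size M"
    using s r(1) by (simp_all add: \<rho>_def T_def)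
  then obtain C where C: "C \<subseteq># M" "chain C = chain B" "size C = \<rho>"
    using chain_meets_rank[OF B(1), of \<rho>] by (auto simp: s_def)
  have "r - \<rho> \<le> e" and label_C: "min (r - \<rho>) (T - \<rho>) = l"
    using l r by (cases "r \<le> T"; simp add: \<rho>_def T_def)+
  have "C + replicate_mset (r - \<rho>) a \<subseteq># M + replicate_mset e a"
    using C(1) \<open>r - \<rho> \<le> e\<close> by (rule add_replicate_mset_mono)
  moreover have "extended_chain a (C + replicate_mset (r - \<rho>) a) = extended_chain a A"
  proof -
    have "size M - bottom (chain C) - size C = T - \<rho>" by (simp add: C T_def s_def)
    then show ?thesis by (simp add: extended_chain_add_replicate_mset[OF C(1)] C(2) label label_C)
  qed
  moreover have "size (C + replicate_mset (r - \<rho>) a) = r"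
    using C(3) l r by (simp add: \<rho>_def)
  ultimately show ?thesis by blast
qed

lemma extended_symmetric_chain_labelling:
  "symmetric_chain_labelling (M + replicate_mset e a) (extended_chain a) extended_bottom"
  by unfold_locales
    (simp_all add: extended_chain_comparable extended_chain_rank_bounds extended_chain_meets_rank)

end

lemma card_antichain_le_card_rank:
  assumes F: "F \<subseteq> {A. A \<subseteq># M}"
    and antichain: "\<And>A B. A \<in> F \<Longrightarrow> B \<in> F \<Longrightarrow> A \<subseteq># B \<Longrightarrow> A = B"
    and through_rank: "\<And>A. A \<in> F \<Longrightarrow> bottom (chain A) \<le> k \<and> k + bottom (chain A) \<le> size M"
  shows "card F \<le> card {A. A \<subseteq># M \<and> size A = k}"
proof -
  let ?R = "{A. A \<subseteq># M \<and> size A = k}"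
  have fin: "finite ?R" by (rule finite_subset[OF _ finite_submultisets[of M]]) blast
  have "inj_on chain F"
  proof (rule inj_onI)
    fix A B assume "A \<in> F" "B \<in> F" "chain A = chain B"
    with F have "A \<subseteq># B \<or> B \<subseteq># A" by (intro chain_comparable) auto
    with \<open>A \<in> F\<close> \<open>B \<in> F\<close> show "A = B" using antichain by auto
  qed
  then have "card F = card (chain ` F)" by (simp add: card_image)
  also have "\<dots> \<le> card (chain ` ?R)"
  proof (rule card_mono)
    show "finite (chain ` ?R)" using fin by simp
    show "chain ` F \<subseteq> chain ` ?R"
    proof
      fix c assume "c \<in> chain ` F"
      then obtain A where "A \<in> F" "c = chain A" by blast
      with F obtain B where "B \<subseteq># M" "chain B = chain A" "size B = k"
        using chain_meets_rank[of A k] through_rank[of A] by auto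
      with \<open>c = chain A\<close> show "c \<in> chain ` ?R" by (intro image_eqI[of c chain B]) auto
    qed
  qed
  also have "\<dots> \<le> card ?R" using fin by (rule card_image_le)
  finally show ?thesis .
qed

lemma card_antichain_le_card_closest_rank:
  assumes F: "F \<subseteq> {A. A \<subseteq># M}"
    and antichain: "\<And>A B. A \<in> F \<Longrightarrow> B \<in> F \<Longrightarrow> A \<subseteq># B \<Longrightarrow> A = B"
    and sizes: "\<And>A. A \<in> F \<Longrightarrow> lo \<le> size A \<and> size A \<le> hi"
    and "lo \<le> k" "k \<le> hi"
    and "\<forall>j::nat. lo \<le> j \<and> j \<le> hi \<longrightarrow>
           \<bar>real k - real (size M) / 2\<bar> \<le> \<bar>real j - real (size M) / 2\<bar>"
  shows "card F \<le> card {A. A \<subseteq># M \<and> size A = k}"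
proof (rule card_antichain_le_card_rank[OF F antichain])
  fix A assume "A \<in> F"
  with F sizes[of A] chain_rank_bounds[of A]
  show "bottom (chain A) \<le> k \<and> k + bottom (chain A) \<le> size M"
    using closest_to_half_in_symmetric_range[OF assms(4,5) _ _ assms(6)] by auto
qed

end

lemma symmetric_chain_labelling_exists:
  "\<exists>chain bottom. symmetric_chain_labelling (M :: 'a multiset) chain bottom"
proof (induction "size M" arbitrary: M rule: less_induct)
  case less
  show ?case
  proof (cases "M = {#}")
    case True
    then have "symmetric_chain_labelling M (\<lambda>_. []) (\<lambda>_. 0)" by unfold_locales auto
    then show ?thesis by blast
  next
    case False
    then obtain a where a: "a \<in># M" by blast
    define M' where "M' = filter_mset (\<lambda>x. x \<noteq> a) M"
    have M: "M = M' + replicate_mset (count M a) a" by (simp add: multiset_eq_iff M'_def)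
    have "size M = size M' + count M a" using arg_cong[OF M, of size] by simp
    with a have "size M' < size M" by simp
    then obtain chain bottom where "symmetric_chain_labelling M' chain bottom" using less by blast
    moreover have "a \<notin># M'" by (simp add: M'_def)
    ultimately have "symmetric_chain_labelling (M' + replicate_mset (count M a) a)
        (symmetric_chain_labelling.extended_chain M' chain bottom a)
        (symmetric_chain_labelling.extended_bottom bottom)"
      by (rule symmetric_chain_labelling.extended_symmetric_chain_labelling)
    from this[unfolded M[symmetric]] show ?thesis by blast
  qed
qed

lemma bij_betw_prime_factorization_divisors:
  assumes "0 < (n::nat)"
  shows "bij_betw prime_factorization {d. 0 < d \<and> d dvd n} {A. A \<subseteq># prime_factorization n}"
proof (rule bij_betw_byWitness[where f' = prod_mset])
  show "\<forall>d\<in>{d. 0 < d \<and> d dvd n}. prod_mset (prime_factorization d) = d" by simp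
  show "prime_factorization ` {d. 0 < d \<and> d dvd n} \<subseteq> {A. A \<subseteq># prime_factorization n}"
    using assms by (auto simp: prime_factorization_subset_iff_dvd)
  have primes: "\<And>p. p \<in># A \<Longrightarrow> prime p" if "A \<subseteq># prime_factorization n" for A
    using that by (auto dest: mset_subset_eqD)
  then show "\<forall>A\<in>{A. A \<subseteq># prime_factorization n}. prime_factorization (prod_mset A) = A"
    by (simp add: prime_factorization_prod_mset_primes)
  show "prod_mset ` {A. A \<subseteq># prime_factorization n} \<subseteq> {d. 0 < d \<and> d dvd n}"
  proof clarify
    fix A assume A: "A \<subseteq># prime_factorization n"
    then have nonzero: "prod_mset A \<noteq> 0" using primes by (metis not_prime_0 prod_mset_zero_iff)
    have "prime_factorization (prod_mset A) \<subseteq># prime_factorization n"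
      using A primes[OF A] by (simp add: prime_factorization_prod_mset_primes)
    then have "prod_mset A dvd n" by (rule prime_factorization_subset_imp_dvd[OF nonzero])
    with nonzero show "0 < prod_mset A \<and> prod_mset A dvd n" by (metis gr0I)
  qed
qed

lemma Ck_eq_card_submultisets:
  assumes "0 < n"
  shows "Ck k n = card {A. A \<subseteq># prime_factorization n \<and> size A = k}"
proof -
  have "bij_betw prime_factorization {d \<in> {d. 0 < d \<and> d dvd n}. bigOmega d = k}
          {A \<in> {A. A \<subseteq># prime_factorization n}. size A = k}"
    by (rule bij_betw_Collect[OF bij_betw_prime_factorization_divisors[OF assms]])
      (simp add: bigOmega_def)
  then show ?thesis unfolding Ck_def by (simp add: bij_betw_same_card)
qed

lemma maxdivs_subset_divisors: "maxdivs x n \<subseteq> {d. 0 < d \<and> d dvd n}"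
  by (auto simp: maxdivs_def)

lemma finite_maxdivs: "0 < n \<Longrightarrow> finite (maxdivs x n)"
  by (rule finite_subset[OF _ finite_divisors_nat]) (auto simp: maxdivs_def)

lemma prime_factorization_maxdivs_antichain:
  assumes "d \<in> maxdivs x n" and "d' \<in> maxdivs x n"
    and "prime_factorization d \<subseteq># prime_factorization d'"
  shows "d = d'"
proof -
  have "d dvd d'"
    using assms(1,3) maxdivs_subset_divisors by (intro prime_factorization_subset_imp_dvd) auto
  with assms(1,2) show ?thesis unfolding maxdivs_def by blast
qed

theorem lemma3p18:
  fixes n k :: nat and x :: real
  assumes "0 < n" and "x \<ge> 1"
    and "Min (bigOmega ` maxdivs x n) \<le> k" and "k \<le> Max (bigOmega ` maxdivs x n)"
    and "\<forall>j::nat. Min (bigOmega ` maxdivs x n) \<le> j \<and> j \<le> Max (bigOmega ` maxdivs x n)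
           \<longrightarrow> \<bar>real k - real (bigOmega n) / 2\<bar> \<le> \<bar>real j - real (bigOmega n) / 2\<bar>"
  shows "card (maxdivs x n) \<le> Ck k n"
proof -
  \<comment> \<open>x \<ge> 1 only makes maxdivs x n nonempty; the bound holds without it.\<close>
  define P where "P = prime_factorization n"
  have size_P: "size P = bigOmega n" by (simp add: P_def bigOmega_def)
  obtain chain bottom where scl: "symmetric_chain_labelling P chain bottom"
    using symmetric_chain_labelling_exists by blast
  have bij: "bij_betw prime_factorization {d. 0 < d \<and> d dvd n} {A. A \<subseteq># P}"
    unfolding P_def using assms(1) by (rule bij_betw_prime_factorization_divisors)
  have "card (maxdivs x n) = card (prime_factorization ` maxdivs x n)"
    using bij_betw_imp_inj_on[OF bij] maxdivs_subset_divisors by (metis card_image inj_on_subset)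
  also have "\<dots> \<le> card {A. A \<subseteq># P \<and> size A = k}"
  proof (rule symmetric_chain_labelling.card_antichain_le_card_closest_rank[OF scl])
    show "prime_factorization ` maxdivs x n \<subseteq> {A. A \<subseteq># P}"
      using bij_betw_apply[OF bij] maxdivs_subset_divisors[of x n] by blast
    show "A = B" if "A \<in> prime_factorization ` maxdivs x n"
      and "B \<in> prime_factorization ` maxdivs x n" and "A \<subseteq># B" for A B
      using that by (auto dest: prime_factorization_maxdivs_antichain)
    show "Min (bigOmega ` maxdivs x n) \<le> size A \<and> size A \<le> Max (bigOmega ` maxdivs x n)"
      if "A \<in> prime_factorization ` maxdivs x n" for A
      using that finite_maxdivs[OF assms(1)] by (auto simp: bigOmega_def intro!: Min_le Max_ge)
  qed (use assms(3-5) in \<open>simp_all add: size_P\<close>)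
  also have "\<dots> = Ck k n" by (simp add: Ck_eq_card_submultisets[OF assms(1)] P_def)
  finally show ?thesis .
qed

end
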